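(* Let $\Pi$ be the node-edge-checkable problem encoding maximal matching defined below, and $\Pi^*$ its node-list variant. Then for every valid input instance $(S,h_{\mathrm{in}})$ of $\Pi^*$ (on any finite semi-graph $S$), $\Pi^*$ admits a valid solution.
   Context: Semi-graph: a bipartite graph $S=(A\sqcup B,C)$ with every $b\in B$ of degree at most $2$; $A$ = nodes, $B$ = edges, $C$ = half-edges (incident node–edge pairs); degree of a node / rank of an edge = its degree in $S$. Node-edge-checkable problem $\Pi=(\Sigma,\mathcal N_\Pi,\mathcal E_\Pi)$: $\mathcal N_\Pi^i$ ($i\ge 0$) and $\mathcal E_\Pi^i$ ($i\in\{0,1,2\}$) are collections of cardinality-$i$ multisets over $\Sigma$. The problem $\Pi$: $\Sigma=\{M,P,O,D\}$. For each $i\ge 0$, $\mathcal N_\Pi^i$ consists of all cardinality-$i$ multisets $\{\chi_1,\dots,\chi_i\}$ over $\Sigma$ such that either (i) exactly one $\chi_j$ equals $M$ and all others lie in $\{P,O,D\}$, or (ii) all $\chi_k$ lie in $\{O,D\}$. $\mathcal E_\Pi^0=\{\emptyset\}$, $\mathcal E_\Pi^1=\{\{D\}\}$, $\mathcal E_\Pi^2=\{\{P,O\},\{M,M\},\{P,P\}\}$. Node-list variant $\Pi^*$: for $i,j\ge0$ and $\psi\in\mathcal N_\Pi^j$, $\mathcal N^i_{\Pi,\psi}$ is the set of cardinality-$i$ multisets $\chi$ over $\Sigma$ with $\chi\uplus\psi\in\mathcal N_\Pi^{i+j}$, and $\mathcal L^i=\{\mathcal N^i_{\Pi,\psi}:\psi\in\mathcal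 N_\Pi^j\text{ for some }j\ge0\}$. A valid input instance is $(S,h_{\mathrm{in}})$ with $h_{\mathrm{in}}(v)\in\mathcal L^{\deg(v)}$ for each node $v$. A valid solution is $h_{\mathrm{out}}:H(S)\to\Sigma$ such that for each node $v$ the multiset of labels on its incident half-edges lies in $h_{\mathrm{in}}(v)$, and for each edge $e$ the multiset of labels on its incident half-edges lies in $\mathcal E_\Pi^{\mathrm{rank}(e)}$. *)

theory Defs
  imports Main "HOL-Library.Multiset"
begin

text \<open>Semi-graph S = (A \<sqinter> B, C): nodes A (type 'a), edges B (type 'b),
  half-edges C \<subseteq> A \<times> B; every edge has degree at most 2.\<close>
definition semigraph :: "'a set \<Rightarrow> 'b set \<Rightarrow> ('a \<times> 'b) set \<Rightarrow> bool" where
  "semigraph A B C \<longleftrightarrow> finite A \<and> finite B \<and> C \<subseteq> A \<times> B \<and>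
     (\<forall>e\<in>B. card {c\<in>C. snd c = e} \<le> 2)"

definition node_deg :: "('a \<times> 'b) set \<Rightarrow> 'a \<Rightarrow> nat" where
  "node_deg C v = card {c\<in>C. fst c = v}"

definition edge_rank :: "('a \<times> 'b) set \<Rightarrow> 'b \<Rightarrow> nat" where
  "edge_rank C e = card {c\<in>C. snd c = e}"

datatype lab = LM | LP | LO | LD

definition N_Pi :: "nat \<Rightarrow> lab multiset set" where
  "N_Pi i = {\<chi>. size \<chi> = i \<and>
     ((count \<chi> LM = 1 \<and> (\<forall>x\<in>#\<chi>. x \<noteq> LM \<longrightarrow> x \<in> {LP, LO, LD})) \<or>
      (\<forall>x\<in>#\<chi>. x \<in> {LO, LD}))}"

definition E_Pi :: "nat \<Rightarrow> lab multiset set" where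
  "E_Pi i = (if i = 0 then {{#}}
            else if i = 1 then {{#LD#}}
            else if i = 2 then {{#LP, LO#}, {#LM, LM#}, {#LP, LP#}}
            else {})"

definition N_Pi_psi :: "nat \<Rightarrow> lab multiset \<Rightarrow> lab multiset set" where
  "N_Pi_psi i \<psi> = {\<chi>. size \<chi> = i \<and> \<chi> + \<psi> \<in> N_Pi (i + size \<psi>)}"

definition L_list :: "nat \<Rightarrow> lab multiset set set" where
  "L_list i = {N_Pi_psi i \<psi> | \<psi> j. \<psi> \<in> N_Pi j}"

definition node_labels :: "('a \<times> 'b) set \<Rightarrow> ('a \<times> 'b \<Rightarrow> lab) \<Rightarrow> 'a \<Rightarrow> lab multiset" where
  "node_labels C h v = image_mset h (mset_set {c\<in>C. fst c = v})"

definition edge_labels :: "('a \<times> 'b) set \<Rightarrow> ('a \<times> 'b \<Rightarrow> lab) \<Rightarrow> 'b \<Rightarrow> lab multiset" where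
  "edge_labels C h e = image_mset h (mset_set {c\<in>C. snd c = e})"

definition valid_input :: "'a set \<Rightarrow> 'b set \<Rightarrow> ('a \<times> 'b) set \<Rightarrow> ('a \<Rightarrow> lab multiset set) \<Rightarrow> bool" where
  "valid_input A B C h_in \<longleftrightarrow> (\<forall>v\<in>A. h_in v \<in> L_list (node_deg C v))"

definition valid_solution :: "'a set \<Rightarrow> 'b set \<Rightarrow> ('a \<times> 'b) set \<Rightarrow> ('a \<Rightarrow> lab multiset set)
    \<Rightarrow> ('a \<times> 'b \<Rightarrow> lab) \<Rightarrow> bool" where
  "valid_solution A B C h_in h_out \<longleftrightarrow>
     (\<forall>v\<in>A. node_labels C h_out v \<in> h_in v) \<and>
     (\<forall>e\<in>B. edge_labels C h_out e \<in> E_Pi (edge_rank C e))"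

end

theory Submission
  imports Defs
begin

text \<open>Call a node free if its list accepts every configuration of \<open>N_Pi\<close>; otherwise the
  list stems from a \<open>\<psi>\<close> that already contains the unique \<open>M\<close>, and then it accepts every
  \<open>M\<close>-free configuration. Take a maximal matching among the rank-2 edges whose endpoints are
  all free. Label both half-edges of a matching edge \<open>M\<close>, the half-edge of a rank-1 edge
  \<open>D\<close>, and a half-edge of any other rank-2 edge \<open>O\<close> if its node is free and unmatched, \<open>P\<close>
  otherwise. Then free nodes see one \<open>M\<close> or only \<open>O\<close>/\<open>D\<close>, non-free nodes see no \<open>M\<close>, and
  maximality of the matching excludes an edge labelled \<open>O O\<close>.\<close>

lemma mem_N_Pi_iff:
  "\<chi> \<in> N_Pi n \<longleftrightarrow> size \<chi> = n \<and> (count \<chi> LM = 1 \<or> set_mset \<chi> \<subseteq> {LO, LD})"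
proof -
  have "x \<noteq> LM \<longrightarrow> x \<in> {LP, LO, LD}" for x
    by (cases x) auto
  then show ?thesis
    unfolding N_Pi_def by auto
qed

lemma L_list_cases:
  assumes "L \<in> L_list d"
  shows "N_Pi d \<subseteq> L \<or> {\<chi>. size \<chi> = d \<and> LM \<notin># \<chi>} \<subseteq> L"
proof -
  obtain \<psi> j where \<psi>: "\<psi> \<in> N_Pi j" and L: "L = N_Pi_psi d \<psi>"
    using assms unfolding L_list_def by blast
  show ?thesis
  proof (cases "set_mset \<psi> \<subseteq> {LO, LD}")
    case True
    then have "count \<psi> LM = 0"
      by (auto simp: count_eq_zero_iff)
    with True have "N_Pi d \<subseteq> L"
      unfolding L N_Pi_psi_def by (auto simp: mem_N_Pi_iff)
    then show ?thesis ..
  next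
    case False
    with \<psi> have "count \<psi> LM = 1"
      by (simp add: mem_N_Pi_iff)
    then have "{\<chi>. size \<chi> = d \<and> LM \<notin># \<chi>} \<subseteq> L"
      unfolding L N_Pi_psi_def by (auto simp: mem_N_Pi_iff count_eq_zero_iff)
    then show ?thesis ..
  qed
qed

lemma pair_in_E_Pi_2:
  assumes "x \<in> {LO, LP}" "y \<in> {LO, LP}" "LP \<in> {x, y}"
  shows "{#x, y#} \<in> E_Pi 2"
  using assms by (cases x; cases y) (simp_all add: E_Pi_def add_mset_commute)

lemma count_image_mset_mset_set:
  "finite S \<Longrightarrow> count (image_mset h (mset_set S)) x = card {c\<in>S. h c = x}"
  by (simp add: count_image_mset Int_def conj_commute)

lemma size_node_labels: "finite C \<Longrightarrow> size (node_labels C h v) = node_deg C v"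
  by (simp add: node_labels_def node_deg_def)

lemma edge_rank_eq_1E:
  assumes "edge_rank C e = 1"
  obtains a where "{c\<in>C. snd c = e} = {(a, e)}"
proof -
  obtain c where c: "{c\<in>C. snd c = e} = {c}"
    using assms unfolding edge_rank_def by (rule card_1_singletonE)
  then have "c \<in> {c\<in>C. snd c = e}"
    by simp
  then obtain a where "c = (a, e)"
    by (cases c) simp
  with c have "{c\<in>C. snd c = e} = {(a, e)}"
    by (simp only:)
  then show thesis
    by (rule that)
qed

lemma edge_rank_eq_2E:
  assumes "edge_rank C e = 2"
  obtains a b where "a \<noteq> b" "{c\<in>C. snd c = e} = {(a, e), (b, e)}"
proof -
  obtain p q where pq: "p \<noteq> q" "{c\<in>C. snd c = e} = {p, q}"
    using assms unfolding edge_rank_def card_2_iff by blast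
  have "p \<in> {c\<in>C. snd c = e}" "q \<in> {c\<in>C. snd c = e}"
    unfolding pq(2) by simp_all
  then obtain a b where ab: "p = (a, e)" "q = (b, e)"
    by (cases p, cases q) simp
  from pq have "a \<noteq> b" "{c\<in>C. snd c = e} = {(a, e), (b, e)}"
    unfolding ab by simp_all
  then show thesis
    by (rule that)
qed

definition matched :: "('a \<times> 'b) set \<Rightarrow> 'b set \<Rightarrow> 'a \<Rightarrow> bool" where
  "matched C F v \<longleftrightarrow> (\<exists>e\<in>F. (v, e) \<in> C)"

definition free_matching :: "('a \<times> 'b) set \<Rightarrow> ('a \<Rightarrow> bool) \<Rightarrow> 'b set \<Rightarrow> bool" where
  "free_matching C free F \<longleftrightarrow>
     (\<forall>e\<in>F. edge_rank C e = 2) \<and>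
     (\<forall>(v, e)\<in>C. e \<in> F \<longrightarrow> free v) \<and>
     (\<forall>v e e'. (v, e) \<in> C \<longrightarrow> (v, e') \<in> C \<longrightarrow> e \<in> F \<longrightarrow> e' \<in> F \<longrightarrow> e = e')"

lemma free_matching_empty: "free_matching C free {}"
  by (simp add: free_matching_def)

lemma free_matching_insert:
  assumes "free_matching C free F" "edge_rank C e = 2"
    and "\<And>v. (v, e) \<in> C \<Longrightarrow> free v \<and> \<not> matched C F v"
  shows "free_matching C free (insert e F)"
  using assms unfolding free_matching_def matched_def by blast

lemma maximal_free_matching_exists:
  assumes "finite B"
  obtains F where "free_matching C free F"
    and "\<And>e. e \<in> B \<Longrightarrow> e \<notin> F \<Longrightarrow> edge_rank C e = 2 \<Longrightarrow>
           \<exists>v. (v, e) \<in> C \<and> (\<not> free v \<or> matched C F v)"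
proof -
  let ?M = "{F. F \<subseteq> B \<and> free_matching C free F}"
  have "finite ?M" "?M \<noteq> {}"
    using assms free_matching_empty by auto
  then obtain F where F: "F \<in> ?M" and max: "\<forall>F'\<in>?M. F \<subseteq> F' \<longrightarrow> F = F'"
    by (meson finite_has_maximal)
  show thesis
  proof (rule that)
    show "free_matching C free F"
      using F by simp
    fix e assume e: "e \<in> B" "e \<notin> F" "edge_rank C e = 2"
    show "\<exists>v. (v, e) \<in> C \<and> (\<not> free v \<or> matched C F v)"
    proof (rule ccontr)
      assume "\<not> ?thesis"
      then have "free_matching C free (insert e F)"
        using F e(3) by (intro free_matching_insert) auto
      then have "F = insert e F"
        using F e(1) max by blast
      with e(2) show False by blast
    qed
  qed
qed

fun matching_labelling ::
    "('a \<times> 'b) set \<Rightarrow> ('a \<Rightarrow> bool) \<Rightarrow> 'b set \<Rightarrow> 'a \<times> 'b \<Rightarrow> lab" where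
  "matching_labelling C free F (v, e) =
     (if e \<in> F then LM
      else if edge_rank C e = 2 then (if free v \<and> \<not> matched C F v then LO else LP)
      else LD)"

lemma matching_labelling_eq_LM_iff:
  "matching_labelling C free F c = LM \<longleftrightarrow> snd c \<in> F"
  by (cases c) simp

lemma node_labels_matching_labelling_free:
  assumes "finite C" "free_matching C free F" "free v"
  shows "node_labels C (matching_labelling C free F) v \<in> N_Pi (node_deg C v)"
proof (cases "matched C F v")
  case True
  then obtain e0 where e0: "e0 \<in> F" "(v, e0) \<in> C"
    by (auto simp: matched_def)
  with assms(2) have "{c\<in>{c\<in>C. fst c = v}. snd c \<in> F} = {(v, e0)}"
    unfolding free_matching_def by auto
  then have "count (node_labels C (matching_labelling C free F) v) LM = 1"
    using assms(1)
    by (simp add: node_labels_def count_image_mset_mset_set matching_labelling_eq_LM_iff)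
  then show ?thesis
    using assms(1) by (simp add: mem_N_Pi_iff size_node_labels)
next
  case False
  then have "e \<notin> F" if "(v, e) \<in> C" for e
    using that unfolding matched_def by blast
  then have "set_mset (node_labels C (matching_labelling C free F) v) \<subseteq> {LO, LD}"
    using assms(1,3) False by (auto simp: node_labels_def)
  then show ?thesis
    using assms(1) by (simp add: mem_N_Pi_iff size_node_labels)
qed

lemma LM_notin_node_labels_matching_labelling:
  assumes "finite C" "free_matching C free F" "\<not> free v"
  shows "LM \<notin># node_labels C (matching_labelling C free F) v"
proof -
  have "matching_labelling C free F c \<noteq> LM" if "c \<in> C" "fst c = v" for c
    using assms(2,3) that unfolding free_matching_def matching_labelling_eq_LM_iff by auto
  then show ?thesis
    using assms(1) by (fastforce simp: node_labels_def simp del: matching_labelling.simps)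
qed

lemma edge_labels_matching_labelling:
  assumes "finite C" "edge_rank C e \<le> 2" "free_matching C free F"
    and saturated: "e \<notin> F \<Longrightarrow> edge_rank C e = 2 \<Longrightarrow>
           \<exists>v. (v, e) \<in> C \<and> (\<not> free v \<or> matched C F v)"
  shows "edge_labels C (matching_labelling C free F) e \<in> E_Pi (edge_rank C e)"
proof -
  let ?h = "matching_labelling C free F"
  have labels: "edge_labels C ?h e = image_mset ?h (mset_set {c\<in>C. snd c = e})"
    by (simp add: edge_labels_def)
  consider "edge_rank C e = 0" | "edge_rank C e = 1" | "edge_rank C e = 2"
    using assms(2) by linarith
  then show ?thesis
  proof cases
    case 1
    with assms(1) have no_half_edges: "{c\<in>C. snd c = e} = {}"
      unfolding edge_rank_def by simp
    show ?thesis
      unfolding labels no_half_edges 1 by (simp add: E_Pi_def)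
  next
    case 2
    then obtain a where "{c\<in>C. snd c = e} = {(a, e)}"
      by (rule edge_rank_eq_1E)
    moreover have "e \<notin> F"
      using assms(3) 2 unfolding free_matching_def by auto
    ultimately show ?thesis
      using 2 by (simp add: labels E_Pi_def)
  next
    case 3
    then obtain a b where ab: "a \<noteq> b" "{c\<in>C. snd c = e} = {(a, e), (b, e)}"
      by (rule edge_rank_eq_2E)
    then have labels2: "edge_labels C ?h e = {#?h (a, e), ?h (b, e)#}"
      by (simp add: labels)
    show ?thesis
    proof (cases "e \<in> F")
      case True
      then show ?thesis
        using labels2 3 by (simp add: E_Pi_def)
    next
      case False
      then obtain v where v: "(v, e) \<in> C" "\<not> free v \<or> matched C F v"
        using saturated 3 by auto
      then have "(v, e) \<in> {c\<in>C. snd c = e}"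
        by simp
      with ab(2) have "v = a \<or> v = b"
        by simp
      with v False 3 have "LP \<in> {?h (a, e), ?h (b, e)}"
        by auto
      moreover have "?h (a, e) \<in> {LO, LP}" "?h (b, e) \<in> {LO, LP}"
        using False 3 by simp_all
      ultimately show ?thesis
        using labels2 3 by (simp add: pair_in_E_Pi_2)
    qed
  qed
qed

theorem mainTheorem10:
  fixes A :: "'a set" and B :: "'b set" and C :: "('a \<times> 'b) set"
    and h_in :: "'a \<Rightarrow> lab multiset set"
  assumes "semigraph A B C"
    and "valid_input A B C h_in"
  shows "\<exists>h_out. valid_solution A B C h_in h_out"
proof -
  have finite: "finite B" "finite C" and rank: "\<And>e. e \<in> B \<Longrightarrow> edge_rank C e \<le> 2"
    using assms(1) finite_subset[of C "A \<times> B"] unfolding semigraph_def edge_rank_def by auto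
  define free where "free v \<longleftrightarrow> N_Pi (node_deg C v) \<subseteq> h_in v" for v
  obtain F where F: "free_matching C free F"
    and saturated: "\<And>e. e \<in> B \<Longrightarrow> e \<notin> F \<Longrightarrow> edge_rank C e = 2 \<Longrightarrow>
           \<exists>v. (v, e) \<in> C \<and> (\<not> free v \<or> matched C F v)"
    using maximal_free_matching_exists[OF finite(1)] by blast
  let ?h = "matching_labelling C free F"
  have "node_labels C ?h v \<in> h_in v" if "v \<in> A" for v
  proof (cases "free v")
    case True
    then show ?thesis
      using node_labels_matching_labelling_free[OF finite(2) F] free_def by blast
  next
    case False
    then have "{\<chi>. size \<chi> = node_deg C v \<and> LM \<notin># \<chi>} \<subseteq> h_in v"
      using L_list_cases assms(2) that unfolding valid_input_def free_def by blast
    then show ?thesis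
      using LM_notin_node_labels_matching_labelling[OF finite(2) F False]
        size_node_labels[OF finite(2)] by blast
  qed
  moreover have "edge_labels C ?h e \<in> E_Pi (edge_rank C e)" if "e \<in> B" for e
    using edge_labels_matching_labelling[OF finite(2) rank F] saturated that by blast
  ultimately show ?thesis
    unfolding valid_solution_def by blast
qed

end
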